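(* Let $\mathcal{L},\tilde{\mathcal{L}}$ be distributions on $[0,\infty]$ satisfying: (H1) $\mathcal{L}$ is useful; (H2) $\mathcal{L}([0,\infty))>p_c$ and $\tilde{\mathcal{L}}([0,\infty))>p_c$; (H3) $\mathcal{L}\ne\tilde{\mathcal{L}}$; and let $(\tau,\tilde\tau)$ be a pair of random variables with marginals $\mathcal{L},\tilde{\mathcal{L}}$ and $\mathbb{E}[\tilde\tau\mid\tau]\le\tau$. Assume moreover that $\mathbb{P}(\mathbb{E}[\tilde\tau\mid\tau]=\tau)=1$ and $\{\tau<\infty\}=\{\tilde\tau<\infty\}$ almost surely. Then there exist a bounded Borel set $I\subset(0,\infty)$ and $\eta>0$ such that $\mathbb{P}(\tau\in I)>0$ and, if $(\tau_1,\tilde\tau_1),\dots,(\tau_4,\tilde\tau_4)$ are independent copies of $(\tau,\tilde\tau)$ and $\mathcal{F}=\sigma(\tau_1,\dots,\tau_4)$, then on the event $\{\tau_1,\dots,\tau_4\in I\}$, \[\mathbb{E}[\min(\tilde\tau_1+\tilde\tau_2,\tilde\tau_3+\tilde\tau_4)\mid\mathcal{F}]<\min(\tau_1+\tau_2,\tau_3+\tau_4)-\eta.\]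
   Context: $p_c$ / $\overrightarrow{p_c}$: critical probabilities of Bernoulli / oriented Bernoulli bond percolation on $\mathbb{Z}^d$, $d\ge2$. With $t_{\min}$ the minimum of the support of $\mathcal{L}$, $\mathcal{L}$ is useful if $\mathcal{L}(\{t_{\min}\})<p_c$ when $t_{\min}=0$ and $<\overrightarrow{p_c}$ when $t_{\min}>0$. *)

theory Defs
  imports "HOL-Probability.Probability"
begin

text \<open>Vertices of Z^d are integer lists of length d. The edge (x,i), i < d, joins x and
  x + e_i. A configuration assigns open (True) / closed (False) to each edge.\<close>

definition zd_edges :: "nat \<Rightarrow> (int list \<times> nat) set" where
  "zd_edges d = {(x, i). length x = d \<and> i < d}"

definition zd_shift :: "int list \<Rightarrow> nat \<Rightarrow> int list" where
  "zd_shift x i = x[i := x ! i + 1]"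

definition zd_origin :: "nat \<Rightarrow> int list" where
  "zd_origin d = replicate d 0"

definition bond_perc :: "nat \<Rightarrow> real \<Rightarrow> (int list \<times> nat \<Rightarrow> bool) measure" where
  "bond_perc d p = PiM (zd_edges d) (\<lambda>_. measure_pmf (bernoulli_pmf p))"

definition open_adj :: "(int list \<times> nat \<Rightarrow> bool) \<Rightarrow> int list \<Rightarrow> int list \<Rightarrow> bool" where
  "open_adj \<omega> x y \<longleftrightarrow> (\<exists>i < length x.
      (\<omega> (x, i) \<and> y = zd_shift x i) \<or> (\<omega> (y, i) \<and> x = zd_shift y i))"

definition open_adj_or :: "(int list \<times> nat \<Rightarrow> bool) \<Rightarrow> int list \<Rightarrow> int list \<Rightarrow> bool" where
  "open_adj_or \<omega> x y \<longleftrightarrow> (\<exists>i < length x. \<omega> (x, i) \<and> y = zd_shift x i)"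

definition perc_prob :: "nat \<Rightarrow> real \<Rightarrow> real" where
  "perc_prob d p = measure (bond_perc d p)
     {\<omega> \<in> space (bond_perc d p). infinite {y. (open_adj \<omega>)\<^sup>*\<^sup>* (zd_origin d) y}}"

definition perc_prob_or :: "nat \<Rightarrow> real \<Rightarrow> real" where
  "perc_prob_or d p = measure (bond_perc d p)
     {\<omega> \<in> space (bond_perc d p). infinite {y. (open_adj_or \<omega>)\<^sup>*\<^sup>* (zd_origin d) y}}"

definition p_c :: "nat \<Rightarrow> real" where
  "p_c d = Sup {p \<in> {0..1}. perc_prob d p = 0}"

definition p_c_or :: "nat \<Rightarrow> real" where
  "p_c_or d = Sup {p \<in> {0..1}. perc_prob_or d p = 0}"

definition measure_support :: "'a::topological_space measure \<Rightarrow> 'a set" where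
  "measure_support N = {x. \<forall>U. open U \<and> x \<in> U \<longrightarrow> emeasure N U > 0}"

definition t_min :: "ennreal measure \<Rightarrow> ennreal" where
  "t_min L = Inf (measure_support L)"

definition useful :: "nat \<Rightarrow> ennreal measure \<Rightarrow> bool" where
  "useful d L \<longleftrightarrow>
     (t_min L = 0 \<longrightarrow> measure L {0} < p_c d) \<and>
     (t_min L > 0 \<longrightarrow> measure L {t_min L} < p_c_or d)"

end

theory Submission
  imports Defs
begin

text \<open>Since \<open>E[\<tau>' | \<tau>] = \<tau>\<close>, a factor \<open>\<tau>'\<^sub>j\<close> in an expectation over four independent copies may be
  exchanged for \<open>\<tau>\<^sub>j\<close> whenever the rest of the integrand depends on the \<open>j\<close>-th copy only through
  \<open>\<tau>\<^sub>j\<close>. As the laws of \<open>\<tau>\<close> and \<open>\<tau>'\<close> differ, \<open>E[|\<tau>' - \<tau>| | \<tau>] \<ge> c > 0\<close> on a set of positive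
  probability inside \<open>(0, \<infinity>)\<close>, and in it we choose a window \<open>I\<close> of width \<open>w = c / 8\<close>. For
  \<open>a\<^sub>i \<in> I\<close> an elementary inequality bounds \<open>2 min(b\<^sub>0 + b\<^sub>1, b\<^sub>2 + b\<^sub>3) + |b\<^sub>0 - a\<^sub>0|\<close> by
  \<open>2 min(a\<^sub>0 + a\<^sub>1, a\<^sub>2 + a\<^sub>3) + 4 w\<close> plus terms \<open>b\<^sub>j - a\<^sub>j\<close> whose weight does not depend on \<open>b\<^sub>j\<close>.
  Integrated over an event \<open>B \<in> \<F>\<close> on which all \<open>\<tau>\<^sub>i \<in> I\<close>, the exchange removes these terms, giving
  \<open>E[2 min(\<tau>') + 8 w; B] \<le> E[2 min(\<tau>) + 4 w; B]\<close>; on the event where the claimed gap \<open>w\<close> fails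
  this forces \<open>P(B) = 0\<close>.
  Only \<open>E[\<tau>' | \<tau>] = \<tau>\<close>, \<open>{\<tau> < \<infinity>} = {\<tau>' < \<infinity>}\<close> and the difference of the laws are used.\<close>

lemma sigma_finite_subalgebra_vimage_algebra:
  assumes "prob_space M" "f \<in> measurable M N"
  shows "sigma_finite_subalgebra M (vimage_algebra (space M) f N)"
proof -
  have "finite_measure_subalgebra M (vimage_algebra (space M) f N)"
    unfolding finite_measure_subalgebra_def finite_measure_subalgebra_axioms_def subalgebra_def
    using assms sets_image_in_sets[OF refl assms(2)]
    by (auto simp: prob_space.finite_measure)
  then show ?thesis
    by (rule finite_measure_subalgebra_is_sigma_finite)
qed

lemma ennreal_inverse_Suc_le_pos:
  assumes "(0::ennreal) < x"
  obtains n :: nat where "ennreal (1 / Suc n) \<le> x"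
proof (cases x)
  case (real r)
  with assms have "0 < r"
    by simp
  then obtain n :: nat where "1 / Suc n < r"
    by (rule nat_approx_posE)
  with real show ?thesis
    by (intro that[of n]) (simp add: ennreal_leI)
next
  case top
  then show ?thesis
    by (intro that[of 0]) simp
qed

lemma exists_nonnull_level_set:
  fixes D :: "'a \<Rightarrow> ennreal"
  assumes \<tau>[measurable]: "\<tau> \<in> borel_measurable M"
    and D: "D \<in> borel_measurable (vimage_algebra (space M) \<tau> borel)"
    and P[measurable]: "P \<in> sets borel"
    and nonzero: "\<not> (AE x in M. \<tau> x \<in> P \<longrightarrow> D x = 0)"
  obtains c B where "0 < c" "B \<in> sets borel" "B \<subseteq> P" "\<tau> -` B \<inter> space M \<notin> null_sets M"
    "\<And>x. x \<in> space M \<Longrightarrow> \<tau> x \<in> B \<Longrightarrow> ennreal c \<le> D x"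
proof -
  have "subalgebra M (vimage_algebra (space M) \<tau> borel)"
    unfolding subalgebra_def using sets_image_in_sets[OF refl \<tau>] by simp
  then have [measurable]: "D \<in> borel_measurable M"
    using D by (rule measurable_from_subalg)
  define L where "L n = {x \<in> space M. \<tau> x \<in> P \<and> ennreal (1 / Suc n) \<le> D x}" for n :: nat
  obtain n where n: "L n \<notin> null_sets M"
  proof (rule ccontr)
    assume "\<not> thesis"
    with that have null: "(\<Union>n. L n) \<in> null_sets M"
      by blast
    have "{x \<in> space M. \<not> (\<tau> x \<in> P \<longrightarrow> D x = 0)} \<subseteq> (\<Union>n. L n)"
    proof
      fix x assume "x \<in> {x \<in> space M. \<not> (\<tau> x \<in> P \<longrightarrow> D x = 0)}"
      then have "x \<in> space M" "\<tau> x \<in> P" "D x \<noteq> 0"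
        by auto
      then obtain n where "ennreal (1 / Suc n) \<le> D x"
        using ennreal_inverse_Suc_le_pos[of "D x"] by (auto simp: zero_less_iff_neq_zero simp del: of_nat_Suc)
      with \<open>x \<in> space M\<close> \<open>\<tau> x \<in> P\<close> show "x \<in> (\<Union>n. L n)"
        by (auto simp: L_def)
    qed
    then have "AE x in M. \<tau> x \<in> P \<longrightarrow> D x = 0"
      by (rule AE_I'[OF null])
    with nonzero show False
      by simp
  qed
  have "{x \<in> space (vimage_algebra (space M) \<tau> borel). ennreal (1 / Suc n) \<le> D x}
      \<in> sets (vimage_algebra (space M) \<tau> borel)"
    using D by measurable
  then have "\<exists>B'\<in>sets borel. {x \<in> space M. ennreal (1 / Suc n) \<le> D x} = \<tau> -` B' \<inter> space M"
    by (simp add: sets_vimage_algebra2) (metis (no_types, lifting))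
  then obtain B' where B'[measurable]: "B' \<in> sets borel"
    and level: "\<And>x. x \<in> space M \<Longrightarrow> ennreal (1 / Suc n) \<le> D x \<longleftrightarrow> \<tau> x \<in> B'"
    by (auto simp: set_eq_iff)
  show thesis
  proof (rule that[of "1 / Suc n" "B' \<inter> P"])
    have "L n = \<tau> -` (B' \<inter> P) \<inter> space M"
      using level by (auto simp: L_def)
    with n show "\<tau> -` (B' \<inter> P) \<inter> space M \<notin> null_sets M"
      by simp
  qed (use level in auto)
qed

definition window :: "real \<Rightarrow> nat \<Rightarrow> ennreal set" where
  "window w k = {ennreal (real k * w)<..ennreal ((real k + 1) * w)}"

lemma exists_window:
  assumes "0 < r" "0 < w"
  obtains k where "ennreal r \<in> window w k"
proof
  define m where "m = \<lceil>r / w\<rceil>"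
  have "0 < m"
    using assms by (simp add: m_def)
  have "real_of_int m - 1 < r / w" "r / w \<le> real_of_int m"
    unfolding m_def by linarith+
  with assms \<open>0 < m\<close> have "real (nat (m - 1)) * w < r" "r \<le> (real (nat (m - 1)) + 1) * w"
    by (simp_all add: field_simps)
  with assms show "ennreal r \<in> window w (nat (m - 1))"
    by (simp add: window_def ennreal_less_iff ennreal_leI)
qed

lemma window_subset: "window w k \<subseteq> {0<..ennreal ((real k + 1) * w)}"
  unfolding window_def by (auto intro: le_less_trans[OF zero_le])

lemma window_narrow:
  assumes "s \<in> window w k" "t \<in> window w k" "0 \<le> w"
  shows "s \<le> t + ennreal w"
proof -
  have "s \<le> ennreal (real k * w) + ennreal w"
    using assms by (simp add: window_def distrib_right ennreal_plus[symmetric] del: ennreal_plus)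
  also have "\<dots> \<le> t + ennreal w"
    using assms(2) by (simp add: window_def less_imp_le)
  finally show ?thesis .
qed

lemma exists_nonnull_window:
  fixes \<tau> :: "'a \<Rightarrow> ennreal"
  assumes "0 < w" "B \<subseteq> {0<..<\<infinity>}" "\<tau> -` B \<inter> space M \<notin> null_sets M"
  obtains k where "\<tau> -` (B \<inter> window w k) \<inter> space M \<notin> null_sets M"
proof (rule ccontr)
  assume "\<not> thesis"
  with that have null: "(\<Union>k. \<tau> -` (B \<inter> window w k) \<inter> space M) \<in> null_sets M"
    by blast
  have eq: "\<tau> -` B \<inter> space M = (\<Union>k. \<tau> -` (B \<inter> window w k) \<inter> space M)"
  proof safe
    fix x assume x: "x \<in> space M" "\<tau> x \<in> B"
    with assms(2) obtain r where r: "\<tau> x = ennreal r" "0 < r"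
      by (cases "\<tau> x") auto
    with \<open>0 < w\<close> obtain k where "\<tau> x \<in> window w k"
      using exists_window by metis
    with x show "x \<in> (\<Union>k. \<tau> -` (B \<inter> window w k) \<inter> space M)"
      by auto
  qed auto
  have "\<tau> -` B \<inter> space M \<in> null_sets M"
    unfolding eq by (rule null)
  with assms(3) show False
    by contradiction
qed

lemma ennreal_add_le_cancel_twice:
  fixes a d e h t :: ennreal
  assumes "a + d + t \<le> h + e + t" "e + e \<le> d" "e + t \<noteq> \<infinity>"
  shows "a + e \<le> h"
proof -
  have "(e + t) + (a + e) = a + (e + e) + t"
    by (simp add: ac_simps)
  also have "\<dots> \<le> a + d + t"
    using assms(2) by (intro add_mono order_refl)
  also have "\<dots> \<le> (e + t) + h"
    using assms(1) by (simp add: ac_simps)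
  finally show ?thesis
    using assms(3) ennreal_add_left_cancel_le by blast
qed

lemma nn_integral_add3:
  assumes "f \<in> borel_measurable M" "g \<in> borel_measurable M" "h \<in> borel_measurable M"
  shows "(\<integral>\<^sup>+x. f x + g x + h x \<partial>M) = (\<integral>\<^sup>+x. f x \<partial>M) + (\<integral>\<^sup>+x. g x \<partial>M) + (\<integral>\<^sup>+x. h x \<partial>M)"
proof -
  have "(\<integral>\<^sup>+x. f x + g x + h x \<partial>M) = (\<integral>\<^sup>+x. f x + g x \<partial>M) + (\<integral>\<^sup>+x. h x \<partial>M)"
    using assms by (intro nn_integral_add) measurable
  also have "\<dots> = (\<integral>\<^sup>+x. f x \<partial>M) + (\<integral>\<^sup>+x. g x \<partial>M) + (\<integral>\<^sup>+x. h x \<partial>M)"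
    by (simp only: nn_integral_add[OF assms(1,2)])
  finally show ?thesis .
qed

lemma nn_integral_PiM_component_mono:
  fixes J :: "('b::topological_space \<times> 'c::topological_space) measure"
    and P Q :: "'b \<times> 'c \<Rightarrow> ennreal" and \<Phi> :: "('i \<Rightarrow> 'b \<times> 'c) \<Rightarrow> ennreal"
  assumes J: "sigma_finite_measure J" "sets J = sets (borel \<Otimes>\<^sub>M borel)"
    and K: "k \<in> K" "finite K"
    and [measurable]: "P \<in> borel_measurable J" "Q \<in> borel_measurable J"
    and QP: "\<And>\<phi>. \<phi> \<in> borel_measurable borel \<Longrightarrow>
      (\<integral>\<^sup>+y. \<phi> (fst y) * Q y \<partial>J) \<le> (\<integral>\<^sup>+y. \<phi> (fst y) * P y \<partial>J)"
    and \<Phi>[measurable]: "\<Phi> \<in> borel_measurable (PiM K (\<lambda>_. J))"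
    and fst_only: "\<And>x y z. x \<in> space (PiM K (\<lambda>_. J)) \<Longrightarrow> fst y = fst z \<Longrightarrow>
      \<Phi> (x(k := y)) = \<Phi> (x(k := z))"
  shows "(\<integral>\<^sup>+\<omega>. \<Phi> \<omega> * Q (\<omega> k) \<partial>PiM K (\<lambda>_. J)) \<le> (\<integral>\<^sup>+\<omega>. \<Phi> \<omega> * P (\<omega> k) \<partial>PiM K (\<lambda>_. J))"
proof -
  interpret product_sigma_finite "\<lambda>_. J"
    by (simp add: product_sigma_finite_def J(1))
  have K_eq: "insert k (K - {k}) = K"
    using K by auto
  have space_J: "space J = UNIV"
    using sets_eq_imp_space_eq[OF J(2)] by (simp add: space_pair_measure)
  have Fubini: "(\<integral>\<^sup>+\<omega>. \<Phi> \<omega> * R (\<omega> k) \<partial>PiM K (\<lambda>_. J))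
      = (\<integral>\<^sup>+x. (\<integral>\<^sup>+y. \<Phi> (x(k := y)) * R y \<partial>J) \<partial>PiM (K - {k}) (\<lambda>_. J))"
    if [measurable]: "R \<in> borel_measurable J" for R
  proof -
    have "(\<lambda>\<omega>. \<Phi> \<omega> * R (\<omega> k)) \<in> borel_measurable (PiM (insert k (K - {k})) (\<lambda>_. J))"
      unfolding K_eq using K by measurable
    from product_nn_integral_insert[OF _ _ this] K K_eq show ?thesis
      by simp
  qed
  have "(\<integral>\<^sup>+y. \<Phi> (x(k := y)) * Q y \<partial>J) \<le> (\<integral>\<^sup>+y. \<Phi> (x(k := y)) * P y \<partial>J)"
    if x: "x \<in> space (PiM (K - {k}) (\<lambda>_. J))" for x
  proof -
    define \<phi> where "\<phi> t = \<Phi> (x(k := (t, undefined)))" for t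
    have upd[measurable]: "(\<lambda>v. x(k := v)) \<in> J \<rightarrow>\<^sub>M PiM K (\<lambda>_. J)"
      using measurable_component_update[OF x, of k] K_eq by simp
    have "(\<lambda>t. (t, undefined)) \<in> borel \<rightarrow>\<^sub>M J"
      by (simp add: measurable_cong_sets[OF refl J(2)])
    then have "\<phi> \<in> borel_measurable borel"
      unfolding \<phi>_def by measurable
    moreover have "\<Phi> (x(k := y)) = \<phi> (fst y)" for y
      using fst_only[OF measurable_space[OF upd, of y], of y "(fst y, undefined)"] space_J
      by (simp add: \<phi>_def)
    ultimately show ?thesis
      using QP by simp
  qed
  then show ?thesis
    by (simp add: Fubini nn_integral_mono)
qed

section \<open>The elementary inequality\<close>

text \<open>With truncated subtraction, \<open>abs_diff s t = |s - t|\<close> for finite \<open>s\<close> and \<open>t\<close>; note that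
  \<open>abs_diff \<infinity> \<infinity> = \<infinity>\<close>.\<close>

definition abs_diff :: "ennreal \<Rightarrow> ennreal \<Rightarrow> ennreal" where
  "abs_diff s t = s - t + (t - s)"

lemma abs_diff_eq_0D:
  assumes "abs_diff s t = 0"
  shows "s = t"
proof -
  from assms have st: "s - t = 0" and ts: "t - s = 0"
    by (simp_all only: abs_diff_def add_eq_0_iff_both_eq_0)
  show "s = t"
    using ennreal_minus_eq_0[OF st] ennreal_minus_eq_0[OF ts] by (rule antisym)
qed

lemma measurable_abs_diff[measurable (raw)]:
  assumes [measurable]: "f \<in> borel_measurable M" "g \<in> borel_measurable M"
  shows "(\<lambda>x. abs_diff (f x) (g x)) \<in> borel_measurable M"
  unfolding abs_diff_def by measurable

lemma min_pair_sums_exchange_real: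
  fixes a0 a1 a2 a3 b0 b1 b2 b3 w :: real
  assumes "\<forall>x\<in>{a0, a1, a2, a3}. \<forall>y\<in>{a0, a1, a2, a3}. x \<le> y + w"
  shows "2 * min (b0 + b1) (b2 + b3) + \<bar>b0 - a0\<bar> + a0
      + (if b0 + a1 < a2 + a3 then 2 * a1 else 2 * a2 + 2 * a3)
    \<le> 2 * min (a0 + a1) (a2 + a3) + 4 * w + b0
      + (if b0 + a1 < a2 + a3 then 2 * b1 else 2 * b2 + 2 * b3)"
  using assms by (auto simp: abs_if min_def)

lemma min_pair_sums_exchange:
  fixes a0 a1 a2 a3 b0 b1 b2 b3 :: ennreal and w :: real
  assumes fin: "a0 < \<infinity>" "a1 < \<infinity>" "a2 < \<infinity>" "a3 < \<infinity>"
      "b0 < \<infinity>" "b1 < \<infinity>" "b2 < \<infinity>" "b3 < \<infinity>"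
    and narrow: "\<forall>x\<in>{a0, a1, a2, a3}. \<forall>y\<in>{a0, a1, a2, a3}. x \<le> y + ennreal w" and "0 \<le> w"
  shows "2 * min (b0 + b1) (b2 + b3) + abs_diff b0 a0 + a0
      + (if b0 + a1 < a2 + a3 then 2 * a1 else 2 * a2 + 2 * a3)
    \<le> 2 * min (a0 + a1) (a2 + a3) + ennreal (4 * w) + b0
      + (if b0 + a1 < a2 + a3 then 2 * b1 else 2 * b2 + 2 * b3)"
proof -
  define x0 x1 x2 x3 y0 y1 y2 y3 where defs: "x0 = enn2real a0" "x1 = enn2real a1" "x2 = enn2real a2"
    "x3 = enn2real a3" "y0 = enn2real b0" "y1 = enn2real b1" "y2 = enn2real b2" "y3 = enn2real b3"
  have reals:
    "a0 = ennreal x0" "a1 = ennreal x1" "a2 = ennreal x2" "a3 = ennreal x3"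
    "b0 = ennreal y0" "b1 = ennreal y1" "b2 = ennreal y2" "b3 = ennreal y3"
    "0 \<le> x0" "0 \<le> x1" "0 \<le> x2" "0 \<le> x3" "0 \<le> y0" "0 \<le> y1" "0 \<le> y2" "0 \<le> y3"
    using fin by (simp_all add: defs)
  have "\<forall>x\<in>{x0, x1, x2, x3}. \<forall>y\<in>{x0, x1, x2, x3}. x \<le> y + w"
    using narrow reals \<open>0 \<le> w\<close> by (simp add: ennreal_plus[symmetric] del: ennreal_plus)
  then have "ennreal (2 * min (y0 + y1) (y2 + y3) + \<bar>y0 - x0\<bar> + x0
      + (if y0 + x1 < x2 + x3 then 2 * x1 else 2 * x2 + 2 * x3))
    \<le> ennreal (2 * min (x0 + x1) (x2 + x3) + 4 * w + y0
      + (if y0 + x1 < x2 + x3 then 2 * y1 else 2 * y2 + 2 * y3))"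
    by (intro ennreal_leI min_pair_sums_exchange_real)
  moreover have "ennreal v - ennreal u + (ennreal u - ennreal v) = ennreal \<bar>v - u\<bar>"
    if "0 \<le> u" "0 \<le> v" for u v :: real
    using that by (simp add: ennreal_minus abs_if ennreal_neg)
  moreover have "numeral n * ennreal u = ennreal (numeral n * u)" if "0 \<le> u" for n u
    using that by (simp add: ennreal_mult)
  ultimately show ?thesis
    using reals \<open>0 \<le> w\<close> unfolding abs_diff_def
    by (simp add: ennreal_plus[symmetric] ennreal_less_iff min_ennreal del: ennreal_plus split: if_split_asm)
qed

text \<open>The weights of the exchange argument: copy \<open>0\<close> always, then the pair realising the bound on
  \<open>min(b\<^sub>0 + b\<^sub>1, b\<^sub>2 + b\<^sub>3)\<close>. The choice looks at \<open>b\<^sub>0\<close> but not at \<open>b\<^sub>1, b\<^sub>2, b\<^sub>3\<close>, so no weight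
  depends on the \<open>\<tau>'\<close> of its own copy.\<close>

definition exchange_weight :: "bool \<Rightarrow> nat \<Rightarrow> ennreal" where
  "exchange_weight s j = (if j = 0 then 1 else if j = 1 then (if s then 2 else 0) else if s then 0 else 2)"

definition exchange_sum :: "(ennreal \<times> ennreal \<Rightarrow> ennreal) \<Rightarrow> (nat \<Rightarrow> ennreal \<times> ennreal) \<Rightarrow> ennreal" where
  "exchange_sum f \<omega> =
    (\<Sum>j<4. exchange_weight (snd (\<omega> 0) + fst (\<omega> 1) < fst (\<omega> 2) + fst (\<omega> 3)) j * f (\<omega> j))"

lemma exchange_sum_eq:
  "exchange_sum f \<omega> = f (\<omega> 0) + (if snd (\<omega> 0) + fst (\<omega> 1) < fst (\<omega> 2) + fst (\<omega> 3)
    then 2 * f (\<omega> 1) else 2 * f (\<omega> 2) + 2 * f (\<omega> 3))"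
proof -
  have "{..<4::nat} = {0, 1, 2, 3}"
    by auto
  then show ?thesis
    by (simp add: exchange_sum_def exchange_weight_def)
qed

section \<open>Exchanging \<open>\<tau>'\<close> for \<open>\<tau>\<close>\<close>

locale mean_preserving_pair =
  fixes M :: "'a measure" and \<tau> \<tau>' :: "'a \<Rightarrow> ennreal"
  assumes prob_space_M: "prob_space M"
    and measurable_\<tau>[measurable]: "\<tau> \<in> borel_measurable M"
    and measurable_\<tau>'[measurable]: "\<tau>' \<in> borel_measurable M"
    and cond_exp_\<tau>': "AE x in M. nn_cond_exp M (vimage_algebra (space M) \<tau> borel) \<tau>' x = \<tau> x"
begin

abbreviation F\<tau> :: "'a measure" where
  "F\<tau> \<equiv> vimage_algebra (space M) \<tau> borel"

lemma sigma_finite_subalgebra_F\<tau>: "sigma_finite_subalgebra M F\<tau>"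
  using prob_space_M by (rule sigma_finite_subalgebra_vimage_algebra) measurable

interpretation F\<tau>: sigma_finite_subalgebra M F\<tau>
  by (rule sigma_finite_subalgebra_F\<tau>)

lemma measurable_F\<tau>[measurable]: "\<tau> \<in> borel_measurable F\<tau>"
  by (rule measurable_vimage_algebra1) simp

lemma nn_integral_cond_exp_F\<tau>:
  assumes [measurable]: "\<phi> \<in> borel_measurable borel" "X \<in> borel_measurable M"
  shows "(\<integral>\<^sup>+x. \<phi> (\<tau> x) * nn_cond_exp M F\<tau> X x \<partial>M) = (\<integral>\<^sup>+x. \<phi> (\<tau> x) * X x \<partial>M)"
  by (rule sigma_finite_subalgebra.nn_cond_exp_intg[OF sigma_finite_subalgebra_F\<tau>]) measurable

lemma nn_integral_mean_preserving:
  assumes [measurable]: "\<phi> \<in> borel_measurable borel"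
  shows "(\<integral>\<^sup>+x. \<phi> (\<tau> x) * \<tau>' x \<partial>M) = (\<integral>\<^sup>+x. \<phi> (\<tau> x) * \<tau> x \<partial>M)"
proof -
  have "(\<integral>\<^sup>+x. \<phi> (\<tau> x) * \<tau>' x \<partial>M) = (\<integral>\<^sup>+x. \<phi> (\<tau> x) * nn_cond_exp M F\<tau> \<tau>' x \<partial>M)"
    by (simp add: nn_integral_cond_exp_F\<tau>)
  also have "\<dots> = (\<integral>\<^sup>+x. \<phi> (\<tau> x) * \<tau> x \<partial>M)"
    using cond_exp_\<tau>' by (intro nn_integral_cong_AE) auto
  finally show ?thesis .
qed

lemma AE_zero_imp_zero: "AE x in M. \<tau> x = 0 \<longrightarrow> \<tau>' x = 0"
proof -
  have "(\<integral>\<^sup>+x. indicator {0} (\<tau> x) * \<tau>' x \<partial>M) = (\<integral>\<^sup>+x. indicator {0} (\<tau> x) * \<tau> x \<partial>M)"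
    by (rule nn_integral_mean_preserving) simp
  also have "\<dots> = 0"
    by (rule nn_integral_zero', rule AE_I2) (simp split: split_indicator)
  finally have "AE x in M. indicator {0} (\<tau> x) * \<tau>' x = 0"
    by (rule iffD1[OF nn_integral_0_iff_AE, rotated]) measurable
  then show ?thesis
    by eventually_elim (simp add: indicator_eq_0_iff)
qed

lemma AE_eq_if_abs_diff_zero:
  assumes finite_iff: "AE x in M. (\<tau> x < \<infinity>) = (\<tau>' x < \<infinity>)"
    and abs_diff_zero: "AE x in M. \<tau> x \<in> {0<..<\<infinity>} \<longrightarrow> abs_diff (\<tau>' x) (\<tau> x) = 0"
  shows "AE x in M. \<tau> x = \<tau>' x"
  using AE_zero_imp_zero finite_iff abs_diff_zero
proof eventually_elim
  case (elim x)
  consider "\<tau> x = 0" | "\<tau> x = \<infinity>" | "\<tau> x \<in> {0<..<\<infinity>}"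
    using gr_zeroI less_top by fastforce
  then show ?case
  proof cases
    case 2
    with elim(2) show ?thesis
      by (simp add: not_less top_unique)
  qed (use elim in \<open>auto dest: abs_diff_eq_0D\<close>)
qed

lemma cond_exp_abs_diff_nonzero:
  assumes distinct: "distr M borel \<tau> \<noteq> distr M borel \<tau>'"
    and finite_iff: "AE x in M. (\<tau> x < \<infinity>) = (\<tau>' x < \<infinity>)"
  shows "\<not> (AE x in M. \<tau> x \<in> {0<..<\<infinity>} \<longrightarrow> nn_cond_exp M F\<tau> (\<lambda>x. abs_diff (\<tau>' x) (\<tau> x)) x = 0)"
proof
  let ?D = "nn_cond_exp M F\<tau> (\<lambda>x. abs_diff (\<tau>' x) (\<tau> x))"
  assume "AE x in M. \<tau> x \<in> {0<..<\<infinity>} \<longrightarrow> ?D x = 0"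
  then have "AE x in M. indicator {0<..<\<infinity>} (\<tau> x) * ?D x = 0"
    by eventually_elim (simp split: split_indicator)
  then have "(\<integral>\<^sup>+x. indicator {0<..<\<infinity>} (\<tau> x) * ?D x \<partial>M) = 0"
    by (rule iffD2[OF nn_integral_0_iff_AE, rotated]) measurable
  moreover have "(\<integral>\<^sup>+x. indicator {0<..<\<infinity>} (\<tau> x) * ?D x \<partial>M)
      = (\<integral>\<^sup>+x. indicator {0<..<\<infinity>} (\<tau> x) * abs_diff (\<tau>' x) (\<tau> x) \<partial>M)"
    by (rule nn_integral_cond_exp_F\<tau>; measurable)
  ultimately have "AE x in M. indicator {0<..<\<infinity>} (\<tau> x) * abs_diff (\<tau>' x) (\<tau> x) = 0"
    by (intro iffD1[OF nn_integral_0_iff_AE, rotated]) (simp_all only:, measurable)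
  then have "AE x in M. \<tau> x \<in> {0<..<\<infinity>} \<longrightarrow> abs_diff (\<tau>' x) (\<tau> x) = 0"
  proof eventually_elim
    case (elim x)
    show ?case
    proof
      assume "\<tau> x \<in> {0<..<\<infinity>}"
      with elim show "abs_diff (\<tau>' x) (\<tau> x) = 0"
        by simp
    qed
  qed
  with finite_iff have "AE x in M. \<tau> x = \<tau>' x"
    by (rule AE_eq_if_abs_diff_zero)
  then have "distr M borel \<tau> = distr M borel \<tau>'"
    using measurable_\<tau> measurable_\<tau>' by (rule distr_cong_AE[OF refl refl])
  with distinct show False
    by contradiction
qed

abbreviation J :: "(ennreal \<times> ennreal) measure" where
  "J \<equiv> distr M (borel \<Otimes>\<^sub>M borel) (\<lambda>x. (\<tau> x, \<tau>' x))"

lemma prob_space_J: "prob_space J"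
  using prob_space_M by (rule prob_space.prob_space_distr) measurable

lemma sets_J: "sets J = sets (borel \<Otimes>\<^sub>M borel)"
  by simp

lemma measurable_fst_J[measurable]: "fst \<in> borel_measurable J"
  and measurable_snd_J[measurable]: "snd \<in> borel_measurable J"
  by (simp_all add: measurable_cong_sets[OF sets_J refl])

lemma nn_integral_J:
  assumes "f \<in> borel_measurable (borel \<Otimes>\<^sub>M borel)"
  shows "(\<integral>\<^sup>+y. f y \<partial>J) = (\<integral>\<^sup>+x. f (\<tau> x, \<tau>' x) \<partial>M)"
  using assms by (intro nn_integral_distr) (measurable, simp add: measurable_cong_sets[OF sets_J refl])

lemma nn_integral_J_snd_eq_fst:
  assumes [measurable]: "\<phi> \<in> borel_measurable borel"
  shows "(\<integral>\<^sup>+y. \<phi> (fst y) * snd y \<partial>J) = (\<integral>\<^sup>+y. \<phi> (fst y) * fst y \<partial>J)"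
proof -
  have "(\<integral>\<^sup>+y. \<phi> (fst y) * snd y \<partial>J) = (\<integral>\<^sup>+x. \<phi> (\<tau> x) * \<tau>' x \<partial>M)"
    by (subst nn_integral_J) measurable
  also have "\<dots> = (\<integral>\<^sup>+x. \<phi> (\<tau> x) * \<tau> x \<partial>M)"
    by (rule nn_integral_mean_preserving) measurable
  also have "\<dots> = (\<integral>\<^sup>+y. \<phi> (fst y) * fst y \<partial>J)"
    by (subst nn_integral_J) measurable
  finally show ?thesis .
qed

lemma nn_integral_PiM_sum_snd_eq_fst:
  assumes K: "finite K"
    and \<Phi>: "\<And>k. k \<in> K \<Longrightarrow> \<Phi> k \<in> borel_measurable (PiM K (\<lambda>_. J))"
    and fst_only: "\<And>k x y z. k \<in> K \<Longrightarrow> x \<in> space (PiM K (\<lambda>_. J)) \<Longrightarrow> fst y = fst z \<Longrightarrow>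
      \<Phi> k (x(k := y)) = \<Phi> k (x(k := z))"
  shows "(\<integral>\<^sup>+\<omega>. (\<Sum>k\<in>K. \<Phi> k \<omega> * snd (\<omega> k)) \<partial>PiM K (\<lambda>_. J))
    = (\<integral>\<^sup>+\<omega>. (\<Sum>k\<in>K. \<Phi> k \<omega> * fst (\<omega> k)) \<partial>PiM K (\<lambda>_. J))"
proof -
  have J: "sigma_finite_measure J"
    using prob_space_J by (rule prob_space_imp_sigma_finite)
  have le: "\<And>\<phi>. \<phi> \<in> borel_measurable borel \<Longrightarrow>
      (\<integral>\<^sup>+y. \<phi> (fst y) * snd y \<partial>J) \<le> (\<integral>\<^sup>+y. \<phi> (fst y) * fst y \<partial>J)"
    and ge: "\<And>\<phi>. \<phi> \<in> borel_measurable borel \<Longrightarrow>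
      (\<integral>\<^sup>+y. \<phi> (fst y) * fst y \<partial>J) \<le> (\<integral>\<^sup>+y. \<phi> (fst y) * snd y \<partial>J)"
    by (simp_all add: nn_integral_J_snd_eq_fst)
  have measurable_term: "(\<lambda>\<omega>. \<Phi> k \<omega> * f (\<omega> k)) \<in> borel_measurable (PiM K (\<lambda>_. J))"
    if "k \<in> K" "f \<in> borel_measurable J" for k f
    using \<Phi>[OF that(1)] that by measurable
  have "(\<integral>\<^sup>+\<omega>. \<Phi> k \<omega> * snd (\<omega> k) \<partial>PiM K (\<lambda>_. J)) = (\<integral>\<^sup>+\<omega>. \<Phi> k \<omega> * fst (\<omega> k) \<partial>PiM K (\<lambda>_. J))"
    if k: "k \<in> K" for k
    using nn_integral_PiM_component_mono[OF J sets_J k K _ _ le \<Phi>[OF k] fst_only[OF k]]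
      nn_integral_PiM_component_mono[OF J sets_J k K _ _ ge \<Phi>[OF k] fst_only[OF k]]
    by (intro antisym) measurable
  then show ?thesis
    by (simp add: nn_integral_sum measurable_term)
qed

end

section \<open>A window on which \<open>\<tau>'\<close> spreads around \<open>\<tau>\<close>\<close>

locale spread_window = mean_preserving_pair +
  fixes I :: "ennreal set" and w b :: real
  assumes sets_I[measurable]: "I \<in> sets borel"
    and w_pos: "0 < w"
    and I_bounded: "I \<subseteq> {..ennreal b}"
    and I_narrow: "\<And>s t. s \<in> I \<Longrightarrow> t \<in> I \<Longrightarrow> s \<le> t + ennreal w"
    and finite_on_I: "AE x in M. \<tau> x \<in> I \<longrightarrow> \<tau>' x < \<infinity>"
    and abs_diff_on_I:
      "AE x in M. \<tau> x \<in> I \<longrightarrow> ennreal (8 * w) \<le> nn_cond_exp M F\<tau> (\<lambda>x. abs_diff (\<tau>' x) (\<tau> x)) x"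
begin

lemma nn_integral_J_abs_diff:
  assumes [measurable]: "\<phi> \<in> borel_measurable borel"
  shows "(\<integral>\<^sup>+y. \<phi> (fst y) * (ennreal (8 * w) * indicator I (fst y)) \<partial>J)
    \<le> (\<integral>\<^sup>+y. \<phi> (fst y) * abs_diff (snd y) (fst y) \<partial>J)"
proof -
  have "(\<integral>\<^sup>+y. \<phi> (fst y) * (ennreal (8 * w) * indicator I (fst y)) \<partial>J)
      = (\<integral>\<^sup>+x. \<phi> (\<tau> x) * (ennreal (8 * w) * indicator I (\<tau> x)) \<partial>M)"
    by (subst nn_integral_J) measurable
  also have "\<dots> \<le> (\<integral>\<^sup>+x. \<phi> (\<tau> x) * nn_cond_exp M F\<tau> (\<lambda>x. abs_diff (\<tau>' x) (\<tau> x)) x \<partial>M)"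
    using abs_diff_on_I
  proof (intro nn_integral_mono_AE, eventually_elim)
    case (elim x)
    then show ?case
      by (cases "\<tau> x \<in> I") (simp_all add: mult_left_mono)
  qed
  also have "\<dots> = (\<integral>\<^sup>+x. \<phi> (\<tau> x) * abs_diff (\<tau>' x) (\<tau> x) \<partial>M)"
    by (rule nn_integral_cond_exp_F\<tau>; measurable)
  also have "\<dots> = (\<integral>\<^sup>+y. \<phi> (fst y) * abs_diff (snd y) (fst y) \<partial>J)"
    by (subst nn_integral_J) measurable
  finally show ?thesis .
qed

abbreviation N :: "(nat \<Rightarrow> ennreal \<times> ennreal) measure" where
  "N \<equiv> PiM {..<4} (\<lambda>_. J)"

abbreviation fsts :: "(nat \<Rightarrow> ennreal \<times> ennreal) \<Rightarrow> nat \<Rightarrow> ennreal" where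
  "fsts \<omega> \<equiv> \<lambda>i\<in>{..<4}. fst (\<omega> i)"

abbreviation F :: "(nat \<Rightarrow> ennreal \<times> ennreal) measure" where
  "F \<equiv> vimage_algebra (space N) fsts (PiM {..<4} (\<lambda>_. borel))"

abbreviation min_fst :: "(nat \<Rightarrow> ennreal \<times> ennreal) \<Rightarrow> ennreal" where
  "min_fst \<omega> \<equiv> min (fst (\<omega> 0) + fst (\<omega> 1)) (fst (\<omega> 2) + fst (\<omega> 3))"

abbreviation min_snd :: "(nat \<Rightarrow> ennreal \<times> ennreal) \<Rightarrow> ennreal" where
  "min_snd \<omega> \<equiv> min (snd (\<omega> 0) + snd (\<omega> 1)) (snd (\<omega> 2) + snd (\<omega> 3))"

abbreviation I_box :: "(nat \<Rightarrow> ennreal) set" where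
  "I_box \<equiv> PiE {..<4} (\<lambda>_. I)"

lemma sets_I_box[measurable]: "I_box \<in> sets (PiM {..<4} (\<lambda>_. borel))"
  by (rule sets_PiM_I_finite) auto

lemma fsts_mem_I_box_iff: "fsts \<omega> \<in> I_box \<longleftrightarrow> (\<forall>i<4. fst (\<omega> i) \<in> I)"
  by (auto simp: restrict_PiE_iff)

lemma fst_mem_I:
  assumes "fsts \<omega> \<in> C" "C \<subseteq> I_box" "i < 4"
  shows "fst (\<omega> i) \<in> I"
  using assms fsts_mem_I_box_iff by blast

lemma prob_space_N: "prob_space N"
  by (rule prob_space_PiM) (simp add: prob_space_J)

lemma measurable_fsts[measurable]: "fsts \<in> N \<rightarrow>\<^sub>M PiM {..<4} (\<lambda>_. borel)"
  by measurable

lemma measurable_exchange_sum[measurable]: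
  "exchange_sum fst \<in> borel_measurable N" "exchange_sum snd \<in> borel_measurable N"
  unfolding exchange_sum_def exchange_weight_def by measurable

lemma sigma_finite_subalgebra_F: "sigma_finite_subalgebra N F"
  using prob_space_N measurable_fsts by (rule sigma_finite_subalgebra_vimage_algebra)

lemma measurable_fsts_F[measurable]: "fsts \<in> F \<rightarrow>\<^sub>M PiM {..<4} (\<lambda>_. borel)"
  by (rule measurable_vimage_algebra1) (use measurable_space[OF measurable_fsts] in blast)

lemma measurable_min_fst_F[measurable]: "min_fst \<in> borel_measurable F"
proof -
  have "min_fst = (\<lambda>\<omega>. (\<lambda>x. min (x 0 + x 1) (x 2 + x 3)) (fsts \<omega>))"
    by (simp add: fun_eq_iff)
  also have "\<dots> \<in> borel_measurable F"
    by measurable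
  finally show ?thesis .
qed

lemma AE_snd_finite: "AE \<omega> in N. \<forall>i<4. fst (\<omega> i) \<in> I \<longrightarrow> snd (\<omega> i) < \<infinity>"
proof -
  have "AE y in J. fst y \<in> I \<longrightarrow> snd y < \<infinity>"
    using finite_on_I by (subst AE_distr_iff) measurable
  then have "AE \<omega> in N. fst (\<omega> i) \<in> I \<longrightarrow> snd (\<omega> i) < \<infinity>" if "i < 4" for i
    using that prob_space_J by (intro AE_PiM_component) auto
  then have "AE \<omega> in N. \<forall>i\<in>{..<4}. fst (\<omega> i) \<in> I \<longrightarrow> snd (\<omega> i) < \<infinity>"
    by (intro eventually_ball_finite) auto
  then show ?thesis
    by (rule eventually_mono) simp
qed

lemma nn_integral_indicator_fsts:
  assumes [measurable]: "C \<in> sets (PiM {..<4} (\<lambda>_. borel))"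
  shows "(\<integral>\<^sup>+\<omega>. indicator C (fsts \<omega>) * ennreal c \<partial>N) = ennreal c * emeasure N {\<omega> \<in> space N. fsts \<omega> \<in> C}"
proof -
  have "(\<integral>\<^sup>+\<omega>. indicator C (fsts \<omega>) * ennreal c \<partial>N)
      = (\<integral>\<^sup>+\<omega>. ennreal c * indicator {\<omega> \<in> space N. fsts \<omega> \<in> C} \<omega> \<partial>N)"
    by (rule nn_integral_cong) (simp add: mult.commute split: split_indicator)
  then show ?thesis
    by (simp add: nn_integral_cmult_indicator)
qed

lemma exchange_on_I_box:
  assumes "fsts \<omega> \<in> I_box" and snd_finite: "\<And>i. i < 4 \<Longrightarrow> snd (\<omega> i) < \<infinity>"
  shows "2 * min_snd \<omega> + abs_diff (snd (\<omega> 0)) (fst (\<omega> 0)) + exchange_sum fst \<omega>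
    \<le> 2 * min_fst \<omega> + ennreal (4 * w) + exchange_sum snd \<omega>"
proof -
  have I: "fst (\<omega> i) \<in> I" if "i < 4" for i
    using assms(1) that fsts_mem_I_box_iff by blast
  have "fst (\<omega> i) < \<infinity>" if "i < 4" for i
    using I[OF that] I_bounded by (auto simp: le_less_trans)
  moreover have "\<forall>s\<in>{fst (\<omega> 0), fst (\<omega> 1), fst (\<omega> 2), fst (\<omega> 3)}.
      \<forall>t\<in>{fst (\<omega> 0), fst (\<omega> 1), fst (\<omega> 2), fst (\<omega> 3)}. s \<le> t + ennreal w"
    using I_narrow I by simp
  ultimately have "2 * min_snd \<omega> + abs_diff (snd (\<omega> 0)) (fst (\<omega> 0)) + fst (\<omega> 0)
      + (if snd (\<omega> 0) + fst (\<omega> 1) < fst (\<omega> 2) + fst (\<omega> 3)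
         then 2 * fst (\<omega> 1) else 2 * fst (\<omega> 2) + 2 * fst (\<omega> 3))
    \<le> 2 * min_fst \<omega> + ennreal (4 * w) + snd (\<omega> 0)
      + (if snd (\<omega> 0) + fst (\<omega> 1) < fst (\<omega> 2) + fst (\<omega> 3)
         then 2 * snd (\<omega> 1) else 2 * snd (\<omega> 2) + 2 * snd (\<omega> 3))"
    using snd_finite w_pos by (intro min_pair_sums_exchange) auto
  then show ?thesis
    by (simp only: exchange_sum_eq add.assoc)
qed

lemma nn_integral_exchange_sum:
  assumes [measurable]: "\<psi> \<in> borel_measurable (PiM {..<4} (\<lambda>_. borel))"
  shows "(\<integral>\<^sup>+\<omega>. \<psi> (fsts \<omega>) * exchange_sum snd \<omega> \<partial>N) = (\<integral>\<^sup>+\<omega>. \<psi> (fsts \<omega>) * exchange_sum fst \<omega> \<partial>N)"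
proof -
  define \<Phi> where "\<Phi> j \<omega> = \<psi> (fsts \<omega>) * exchange_weight (snd (\<omega> 0) + fst (\<omega> 1) < fst (\<omega> 2) + fst (\<omega> 3)) j"
    for j \<omega>
  have [measurable]: "\<Phi> j \<in> borel_measurable N" for j
    unfolding \<Phi>_def exchange_weight_def by measurable
  have "\<psi> (fsts \<omega>) * exchange_sum f \<omega> = (\<Sum>j<4. \<Phi> j \<omega> * f (\<omega> j))" for f \<omega>
    unfolding exchange_sum_def \<Phi>_def by (simp add: sum_distrib_left mult.assoc)
  moreover have "(\<integral>\<^sup>+\<omega>. (\<Sum>j<4. \<Phi> j \<omega> * snd (\<omega> j)) \<partial>N) = (\<integral>\<^sup>+\<omega>. (\<Sum>j<4. \<Phi> j \<omega> * fst (\<omega> j)) \<partial>N)"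
  proof (rule nn_integral_PiM_sum_snd_eq_fst)
    fix j :: nat and x :: "nat \<Rightarrow> ennreal \<times> ennreal" and y z :: "ennreal \<times> ennreal"
    assume "j \<in> {..<4}" "fst y = fst z"
    moreover have "fsts (x(j := y)) = fsts (x(j := z))"
      using \<open>fst y = fst z\<close> by (auto simp: fun_eq_iff)
    ultimately show "\<Phi> j (x(j := y)) = \<Phi> j (x(j := z))"
      by (cases "j = 0") (simp_all add: \<Phi>_def exchange_weight_def)
  qed simp_all
  ultimately show ?thesis
    by simp
qed

lemma nn_integral_exchange_sum_finite:
  assumes "C \<subseteq> I_box"
  shows "(\<integral>\<^sup>+\<omega>. indicator C (fsts \<omega>) * exchange_sum fst \<omega> \<partial>N) < \<infinity>"
proof -
  interpret N: prob_space N
    by (rule prob_space_N)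
  define B where "B = ennreal b + (2 * ennreal b + (2 * ennreal b + 2 * ennreal b))"
  have B: "f0 + (if c then 2 * f1 else 2 * f2 + 2 * f3) \<le> B"
    if "f0 \<le> ennreal b" "f1 \<le> ennreal b" "f2 \<le> ennreal b" "f3 \<le> ennreal b" for c and f0 f1 f2 f3 :: ennreal
  proof -
    have "f0 + (if c then 2 * f1 else 2 * f2 + 2 * f3) \<le> f0 + (2 * f1 + (2 * f2 + 2 * f3))"
      by (cases c) simp_all
    also have "\<dots> \<le> B"
      unfolding B_def using that by (intro add_mono mult_left_mono) auto
    finally show ?thesis .
  qed
  have "indicator C (fsts \<omega>) * exchange_sum fst \<omega> \<le> B" for \<omega>
  proof (cases "fsts \<omega> \<in> C")
    case True
    with assms have "fsts \<omega> \<in> I_box"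
      by blast
    then have "fst (\<omega> i) \<le> ennreal b" if "i < 4" for i
      using I_bounded that fsts_mem_I_box_iff by blast
    with True show ?thesis
      by (simp add: exchange_sum_eq B)
  qed simp
  then have "(\<integral>\<^sup>+\<omega>. indicator C (fsts \<omega>) * exchange_sum fst \<omega> \<partial>N) \<le> (\<integral>\<^sup>+\<omega>. B \<partial>N)"
    by (intro nn_integral_mono)
  also have "\<dots> < \<infinity>"
    by (simp add: N.emeasure_space_1 B_def ennreal_mult_less_top)
  finally show ?thesis .
qed

lemma nn_integral_abs_diff_on_I_box:
  assumes [measurable]: "C \<in> sets (PiM {..<4} (\<lambda>_. borel))" and "C \<subseteq> I_box"
  shows "(\<integral>\<^sup>+\<omega>. indicator C (fsts \<omega>) * ennreal (8 * w) \<partial>N)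
    \<le> (\<integral>\<^sup>+\<omega>. indicator C (fsts \<omega>) * abs_diff (snd (\<omega> 0)) (fst (\<omega> 0)) \<partial>N)"
proof -
  have "(\<integral>\<^sup>+\<omega>. indicator C (fsts \<omega>) * ennreal (8 * w) \<partial>N)
      = (\<integral>\<^sup>+\<omega>. indicator C (fsts \<omega>) * (ennreal (8 * w) * indicator I (fst (\<omega> 0))) \<partial>N)"
  proof (rule nn_integral_cong)
    fix \<omega> :: "nat \<Rightarrow> ennreal \<times> ennreal"
    show "indicator C (fsts \<omega>) * ennreal (8 * w)
        = indicator C (fsts \<omega>) * (ennreal (8 * w) * indicator I (fst (\<omega> 0)))"
      using fst_mem_I[of \<omega> C 0] assms(2) by (cases "fsts \<omega> \<in> C") simp_all
  qed
  also have "\<dots> \<le> (\<integral>\<^sup>+\<omega>. indicator C (fsts \<omega>) * abs_diff (snd (\<omega> 0)) (fst (\<omega> 0)) \<partial>N)"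
  proof (rule nn_integral_PiM_component_mono)
    show "sigma_finite_measure J"
      using prob_space_J by (rule prob_space_imp_sigma_finite)
    show "(\<integral>\<^sup>+y. \<phi> (fst y) * (ennreal (8 * w) * indicator I (fst y)) \<partial>J)
        \<le> (\<integral>\<^sup>+y. \<phi> (fst y) * abs_diff (snd y) (fst y) \<partial>J)" if "\<phi> \<in> borel_measurable borel" for \<phi>
      using that by (rule nn_integral_J_abs_diff)
    show "indicator C (fsts (x(0 := y))) = (indicator C (fsts (x(0 := z))) :: ennreal)"
      if "fst y = fst z" for x and y z :: "ennreal \<times> ennreal"
    proof -
      have "fsts (x(0 := y)) = fsts (x(0 := z))"
        using that by (auto simp: fun_eq_iff)
      then show ?thesis
        by simp
    qed
  qed (simp_all add: sets_J)
  finally show ?thesis .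
qed

lemma nn_integral_exchange_on_I_box:
  assumes C[measurable]: "C \<in> sets (PiM {..<4} (\<lambda>_. borel))" and C_box: "C \<subseteq> I_box"
  shows "(\<integral>\<^sup>+\<omega>. indicator C (fsts \<omega>) * (2 * min_snd \<omega>) \<partial>N)
      + (\<integral>\<^sup>+\<omega>. indicator C (fsts \<omega>) * abs_diff (snd (\<omega> 0)) (fst (\<omega> 0)) \<partial>N)
      + (\<integral>\<^sup>+\<omega>. indicator C (fsts \<omega>) * exchange_sum fst \<omega> \<partial>N)
    \<le> (\<integral>\<^sup>+\<omega>. indicator C (fsts \<omega>) * (2 * min_fst \<omega>) \<partial>N)
      + ennreal (4 * w) * emeasure N {\<omega> \<in> space N. fsts \<omega> \<in> C}
      + (\<integral>\<^sup>+\<omega>. indicator C (fsts \<omega>) * exchange_sum fst \<omega> \<partial>N)"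
proof -
  define ind :: "(nat \<Rightarrow> ennreal \<times> ennreal) \<Rightarrow> ennreal" where "ind \<omega> = indicator C (fsts \<omega>)" for \<omega>
  have [measurable]: "ind \<in> borel_measurable N"
    unfolding ind_def by measurable
  have "AE \<omega> in N. ind \<omega> * (2 * min_snd \<omega>) + ind \<omega> * abs_diff (snd (\<omega> 0)) (fst (\<omega> 0))
      + ind \<omega> * exchange_sum fst \<omega>
    \<le> ind \<omega> * (2 * min_fst \<omega>) + ind \<omega> * ennreal (4 * w) + ind \<omega> * exchange_sum snd \<omega>"
    using AE_snd_finite
  proof eventually_elim
    case (elim \<omega>)
    show ?case
    proof (cases "fsts \<omega> \<in> C")
      case True
      have box: "fsts \<omega> \<in> I_box"
        using True C_box by blast
      have finite: "snd (\<omega> i) < \<infinity>" if "i < 4" for i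
        using elim fst_mem_I[OF True C_box that] that by blast
      from exchange_on_I_box[OF box finite] True show ?thesis
        by (simp add: ind_def)
    qed (simp add: ind_def)
  qed
  then have "(\<integral>\<^sup>+\<omega>. ind \<omega> * (2 * min_snd \<omega>) + ind \<omega> * abs_diff (snd (\<omega> 0)) (fst (\<omega> 0))
        + ind \<omega> * exchange_sum fst \<omega> \<partial>N)
      \<le> (\<integral>\<^sup>+\<omega>. ind \<omega> * (2 * min_fst \<omega>) + ind \<omega> * ennreal (4 * w) + ind \<omega> * exchange_sum snd \<omega> \<partial>N)"
    by (rule nn_integral_mono_AE)
  moreover have "(\<integral>\<^sup>+\<omega>. ind \<omega> * (2 * min_snd \<omega>) + ind \<omega> * abs_diff (snd (\<omega> 0)) (fst (\<omega> 0))
        + ind \<omega> * exchange_sum fst \<omega> \<partial>N)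
      = (\<integral>\<^sup>+\<omega>. ind \<omega> * (2 * min_snd \<omega>) \<partial>N) + (\<integral>\<^sup>+\<omega>. ind \<omega> * abs_diff (snd (\<omega> 0)) (fst (\<omega> 0)) \<partial>N)
        + (\<integral>\<^sup>+\<omega>. ind \<omega> * exchange_sum fst \<omega> \<partial>N)"
    by (rule nn_integral_add3; measurable)
  moreover have "(\<integral>\<^sup>+\<omega>. ind \<omega> * (2 * min_fst \<omega>) + ind \<omega> * ennreal (4 * w) + ind \<omega> * exchange_sum snd \<omega> \<partial>N)
      = (\<integral>\<^sup>+\<omega>. ind \<omega> * (2 * min_fst \<omega>) \<partial>N) + ennreal (4 * w) * emeasure N {\<omega> \<in> space N. fsts \<omega> \<in> C}
        + (\<integral>\<^sup>+\<omega>. ind \<omega> * exchange_sum fst \<omega> \<partial>N)"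
    unfolding ind_def nn_integral_indicator_fsts[OF C, symmetric]
      nn_integral_exchange_sum[OF borel_measurable_indicator[OF C], symmetric]
    by (rule nn_integral_add3; measurable)
  ultimately show ?thesis
    unfolding ind_def by simp
qed

lemma nn_integral_min_snd_gap:
  assumes C[measurable]: "C \<in> sets (PiM {..<4} (\<lambda>_. borel))" and C_box: "C \<subseteq> I_box"
  shows "(\<integral>\<^sup>+\<omega>. indicator C (fsts \<omega>) * (2 * min_snd \<omega> + ennreal (4 * w)) \<partial>N)
    \<le> (\<integral>\<^sup>+\<omega>. indicator C (fsts \<omega>) * (2 * min_fst \<omega>) \<partial>N)"
proof -
  interpret N: prob_space N
    by (rule prob_space_N)
  define \<mu> where "\<mu> = emeasure N {\<omega> \<in> space N. fsts \<omega> \<in> C}"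
  have "ennreal (4 * w) * \<mu> + ennreal (4 * w) * \<mu> = (\<integral>\<^sup>+\<omega>. indicator C (fsts \<omega>) * ennreal (8 * w) \<partial>N)"
    using w_pos unfolding \<mu>_def nn_integral_indicator_fsts[OF C]
    by (simp add: distrib_right[symmetric] ennreal_plus[symmetric] del: ennreal_plus)
  also have "\<dots> \<le> (\<integral>\<^sup>+\<omega>. indicator C (fsts \<omega>) * abs_diff (snd (\<omega> 0)) (fst (\<omega> 0)) \<partial>N)"
    by (rule nn_integral_abs_diff_on_I_box[OF C C_box])
  finally have spread: "ennreal (4 * w) * \<mu> + ennreal (4 * w) * \<mu>
    \<le> (\<integral>\<^sup>+\<omega>. indicator C (fsts \<omega>) * abs_diff (snd (\<omega> 0)) (fst (\<omega> 0)) \<partial>N)" .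
  have "ennreal (4 * w) * \<mu> + (\<integral>\<^sup>+\<omega>. indicator C (fsts \<omega>) * exchange_sum fst \<omega> \<partial>N) \<noteq> \<infinity>"
  proof -
    have "\<mu> < \<infinity>"
      unfolding \<mu>_def by (simp add: less_top[symmetric] N.emeasure_finite)
    with nn_integral_exchange_sum_finite[OF C_box] show ?thesis
      by (simp add: ennreal_mult_less_top less_top)
  qed
  from ennreal_add_le_cancel_twice[OF nn_integral_exchange_on_I_box[OF C C_box, folded \<mu>_def] spread this]
  have "(\<integral>\<^sup>+\<omega>. indicator C (fsts \<omega>) * (2 * min_snd \<omega>) \<partial>N) + ennreal (4 * w) * \<mu>
    \<le> (\<integral>\<^sup>+\<omega>. indicator C (fsts \<omega>) * (2 * min_fst \<omega>) \<partial>N)" .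
  moreover have "(\<integral>\<^sup>+\<omega>. indicator C (fsts \<omega>) * (2 * min_snd \<omega> + ennreal (4 * w)) \<partial>N)
      = (\<integral>\<^sup>+\<omega>. indicator C (fsts \<omega>) * (2 * min_snd \<omega>) \<partial>N) + ennreal (4 * w) * \<mu>"
    unfolding \<mu>_def nn_integral_indicator_fsts[OF C, symmetric] distrib_left
    by (rule nn_integral_add; measurable)
  ultimately show ?thesis
    by simp
qed

lemma nn_integral_min_fst_finite:
  assumes "C \<subseteq> I_box"
  shows "(\<integral>\<^sup>+\<omega>. indicator C (fsts \<omega>) * (2 * min_fst \<omega>) \<partial>N) < \<infinity>"
proof -
  interpret N: prob_space N
    by (rule prob_space_N)
  have "indicator C (fsts \<omega>) * (2 * min_fst \<omega>) \<le> 2 * (ennreal b + ennreal b)" for \<omega>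
  proof (cases "fsts \<omega> \<in> C")
    case True
    with assms I_bounded have "fst (\<omega> 0) \<le> ennreal b" "fst (\<omega> 1) \<le> ennreal b"
      using fst_mem_I[OF True assms, of 0] fst_mem_I[OF True assms, of 1] by auto
    then have "2 * min_fst \<omega> \<le> 2 * (ennreal b + ennreal b)"
      by (intro mult_left_mono min.coboundedI1 add_mono) simp_all
    with True show ?thesis
      by simp
  qed simp
  then have "(\<integral>\<^sup>+\<omega>. indicator C (fsts \<omega>) * (2 * min_fst \<omega>) \<partial>N) \<le> (\<integral>\<^sup>+\<omega>. 2 * (ennreal b + ennreal b) \<partial>N)"
    by (intro nn_integral_mono)
  also have "\<dots> < \<infinity>"
    by (simp add: N.emeasure_space_1 ennreal_mult_less_top)
  finally show ?thesis .
qed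

lemma nn_integral_cond_exp_min_snd:
  assumes [measurable]: "C \<in> sets (PiM {..<4} (\<lambda>_. borel))"
  shows "(\<integral>\<^sup>+\<omega>. indicator C (fsts \<omega>) * (2 * nn_cond_exp N F min_snd \<omega>) \<partial>N)
    = (\<integral>\<^sup>+\<omega>. indicator C (fsts \<omega>) * (2 * min_snd \<omega>) \<partial>N)"
proof -
  have "(\<lambda>\<omega>. (2::ennreal) * indicator C (fsts \<omega>)) \<in> borel_measurable F" "min_snd \<in> borel_measurable N"
    by measurable
  from sigma_finite_subalgebra.nn_cond_exp_intg[OF sigma_finite_subalgebra_F this]
  show ?thesis
    by (simp add: mult_ac)
qed

lemma emeasure_gap_violation_zero:
  assumes C[measurable]: "C \<in> sets (PiM {..<4} (\<lambda>_. borel))" and C_box: "C \<subseteq> I_box"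
    and violation: "\<And>\<omega>. \<omega> \<in> space N \<Longrightarrow> fsts \<omega> \<in> C \<Longrightarrow> min_fst \<omega> \<le> nn_cond_exp N F min_snd \<omega> + ennreal w"
  shows "emeasure N {\<omega> \<in> space N. fsts \<omega> \<in> C} = 0"
proof -
  interpret N: prob_space N
    by (rule prob_space_N)
  interpret F: sigma_finite_subalgebra N F
    by (rule sigma_finite_subalgebra_F)
  define g where "g = nn_cond_exp N F min_snd"
  define \<mu> where "\<mu> = emeasure N {\<omega> \<in> space N. fsts \<omega> \<in> C}"
  define G where "G = (\<integral>\<^sup>+\<omega>. indicator C (fsts \<omega>) * (2 * g \<omega>) \<partial>N)"
  have [measurable]: "g \<in> borel_measurable N"
    unfolding g_def by measurable
  have add_const: "(\<integral>\<^sup>+\<omega>. indicator C (fsts \<omega>) * (f \<omega> + ennreal c) \<partial>N)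
      = (\<integral>\<^sup>+\<omega>. indicator C (fsts \<omega>) * f \<omega> \<partial>N) + ennreal c * \<mu>"
    if [measurable]: "f \<in> borel_measurable N" for f c
    unfolding distrib_left \<mu>_def nn_integral_indicator_fsts[OF C, symmetric]
    by (rule nn_integral_add; measurable)
  have "G + ennreal (4 * w) * \<mu> = (\<integral>\<^sup>+\<omega>. indicator C (fsts \<omega>) * (2 * min_snd \<omega>) \<partial>N) + ennreal (4 * w) * \<mu>"
    unfolding G_def g_def nn_integral_cond_exp_min_snd[OF C] ..
  also have "\<dots> = (\<integral>\<^sup>+\<omega>. indicator C (fsts \<omega>) * (2 * min_snd \<omega> + ennreal (4 * w)) \<partial>N)"
    by (rule add_const[symmetric]) measurable
  also have "\<dots> \<le> (\<integral>\<^sup>+\<omega>. indicator C (fsts \<omega>) * (2 * min_fst \<omega>) \<partial>N)"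
    by (rule nn_integral_min_snd_gap[OF C C_box])
  finally have lower: "G + ennreal (4 * w) * \<mu> \<le> (\<integral>\<^sup>+\<omega>. indicator C (fsts \<omega>) * (2 * min_fst \<omega>) \<partial>N)" .
  have "(\<integral>\<^sup>+\<omega>. indicator C (fsts \<omega>) * (2 * min_fst \<omega>) \<partial>N)
      \<le> (\<integral>\<^sup>+\<omega>. indicator C (fsts \<omega>) * (2 * g \<omega> + ennreal (2 * w)) \<partial>N)"
  proof (rule nn_integral_mono)
    fix \<omega> assume "\<omega> \<in> space N"
    with violation[of \<omega>] have "fsts \<omega> \<in> C \<Longrightarrow> 2 * min_fst \<omega> \<le> 2 * (g \<omega> + ennreal w)"
      unfolding g_def by (intro mult_left_mono) auto
    with w_pos show "indicator C (fsts \<omega>) * (2 * min_fst \<omega>) \<le> indicator C (fsts \<omega>) * (2 * g \<omega> + ennreal (2 * w))"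
      by (cases "fsts \<omega> \<in> C") (simp_all add: ennreal_mult distrib_left)
  qed
  also have "\<dots> = G + ennreal (2 * w) * \<mu>"
    unfolding G_def by (rule add_const) measurable
  finally have upper: "(\<integral>\<^sup>+\<omega>. indicator C (fsts \<omega>) * (2 * min_fst \<omega>) \<partial>N) \<le> G + ennreal (2 * w) * \<mu>" .
  have "G \<le> G + ennreal (4 * w) * \<mu>"
    by simp
  also note lower
  also note nn_integral_min_fst_finite[OF C_box]
  finally have "G < \<infinity>" .
  moreover have "\<mu> < \<infinity>"
    unfolding \<mu>_def by (simp add: less_top[symmetric] N.emeasure_finite)
  ultimately have "G + ennreal (2 * w) * \<mu> \<noteq> \<infinity>"
    by (simp add: ennreal_mult_less_top less_top)
  moreover have "(G + ennreal (2 * w) * \<mu>) + ennreal (2 * w) * \<mu> \<le> (G + ennreal (2 * w) * \<mu>) + 0"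
    using order_trans[OF lower upper] w_pos
    by (simp add: add.assoc distrib_right[symmetric] ennreal_plus[symmetric] del: ennreal_plus)
  ultimately have "ennreal (2 * w) * \<mu> \<le> 0"
    by (simp only: ennreal_add_left_cancel_le) simp
  then show ?thesis
    using w_pos unfolding \<mu>_def by simp
qed

lemma AE_cond_exp_min_snd_gap:
  "AE \<omega> in N. (\<forall>i<4. fst (\<omega> i) \<in> I) \<longrightarrow> nn_cond_exp N F min_snd \<omega> + ennreal w < min_fst \<omega>"
proof -
  interpret F: sigma_finite_subalgebra N F
    by (rule sigma_finite_subalgebra_F)
  define Bad where "Bad = {\<omega> \<in> space N. fsts \<omega> \<in> I_box
    \<and> \<not> nn_cond_exp N F min_snd \<omega> + ennreal w < min_fst \<omega>}"
  have "{\<omega> \<in> space F. fsts \<omega> \<in> I_box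
      \<and> \<not> nn_cond_exp N F min_snd \<omega> + ennreal w < min_fst \<omega>} \<in> sets F"
    by measurable
  then have "Bad \<in> sets F"
    by (simp add: Bad_def)
  moreover have "fsts \<in> space N \<rightarrow> space (PiM {..<4} (\<lambda>_. borel))"
    using measurable_space[OF measurable_fsts] by blast
  ultimately obtain C where C[measurable]: "C \<in> sets (PiM {..<4} (\<lambda>_. borel))"
    and Bad_eq: "Bad = fsts -` C \<inter> space N"
    by (auto simp: sets_vimage_algebra2)
  have "emeasure N {\<omega> \<in> space N. fsts \<omega> \<in> C \<inter> I_box} = 0"
  proof (rule emeasure_gap_violation_zero)
    fix \<omega> assume "\<omega> \<in> space N" "fsts \<omega> \<in> C \<inter> I_box"
    then have "\<omega> \<in> Bad"
      unfolding Bad_eq by simp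
    then have "\<not> nn_cond_exp N F min_snd \<omega> + ennreal w < min_fst \<omega>"
      unfolding Bad_def by blast
    then show "min_fst \<omega> \<le> nn_cond_exp N F min_snd \<omega> + ennreal w"
      by (simp only: not_less)
  qed (rule sets.Int[OF C sets_I_box], blast)
  moreover have "{\<omega> \<in> space N. fsts \<omega> \<in> C \<inter> I_box} \<in> sets N"
    using measurable_sets[OF measurable_fsts sets.Int[OF C sets_I_box]] by (simp add: vimage_def Int_def conj_commute)
  ultimately have null: "{\<omega> \<in> space N. fsts \<omega> \<in> C \<inter> I_box} \<in> null_sets N"
    by (rule null_setsI)
  show ?thesis
    using AE_not_in[OF null] AE_space
  proof eventually_elim
    case (elim \<omega>)
    show ?case
    proof (rule impI, rule ccontr)
      assume "\<forall>i<4. fst (\<omega> i) \<in> I" "\<not> nn_cond_exp N F min_snd \<omega> + ennreal w < min_fst \<omega>"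
      moreover from this(1) have "fsts \<omega> \<in> I_box"
        by (simp add: fsts_mem_I_box_iff)
      ultimately have "\<omega> \<in> Bad"
        using elim(2) unfolding Bad_def by blast
      with elim \<open>fsts \<omega> \<in> I_box\<close> show False
        unfolding Bad_eq by blast
    qed
  qed
qed

end

context mean_preserving_pair
begin

lemma exists_spread_window:
  assumes distinct: "distr M borel \<tau> \<noteq> distr M borel \<tau>'"
    and finite_iff: "AE x in M. (\<tau> x < \<infinity>) = (\<tau>' x < \<infinity>)"
  obtains I w b where "spread_window M \<tau> \<tau>' I w b" "I \<subseteq> {0<..ennreal b}"
    "0 < measure M {x \<in> space M. \<tau> x \<in> I}"
proof -
  interpret M: prob_space M
    by (rule prob_space_M)
  obtain c B where c: "0 < c" and B[measurable]: "B \<in> sets borel" and B_sub: "B \<subseteq> {0<..<\<infinity>}"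
    and B_nonnull: "\<tau> -` B \<inter> space M \<notin> null_sets M"
    and B_spread: "\<And>x. x \<in> space M \<Longrightarrow> \<tau> x \<in> B \<Longrightarrow>
      ennreal c \<le> nn_cond_exp M F\<tau> (\<lambda>x. abs_diff (\<tau>' x) (\<tau> x)) x"
    by (rule exists_nonnull_level_set[OF measurable_\<tau> _ _ cond_exp_abs_diff_nonzero[OF distinct finite_iff]])
      measurable
  define w where "w = c / 8"
  have w: "0 < w"
    using c by (simp add: w_def)
  obtain k where k: "\<tau> -` (B \<inter> window w k) \<inter> space M \<notin> null_sets M"
    using exists_nonnull_window[OF w B_sub B_nonnull] by blast
  define I where "I = B \<inter> window w k"
  define b where "b = (real k + 1) * w"
  have I_sub: "I \<subseteq> {0<..ennreal b}"
    using window_subset unfolding I_def b_def by blast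
  have sets_I[measurable]: "I \<in> sets borel"
    unfolding I_def window_def by measurable
  have "spread_window M \<tau> \<tau>' I w b"
  proof (rule spread_window.intro[OF mean_preserving_pair_axioms spread_window_axioms.intro])
    show "s \<le> t + ennreal w" if "s \<in> I" "t \<in> I" for s t
      using that w by (auto simp: I_def intro: window_narrow)
    show "AE x in M. \<tau> x \<in> I \<longrightarrow> \<tau>' x < \<infinity>"
      using finite_iff by eventually_elim (use B_sub in \<open>auto simp: I_def\<close>)
    show "AE x in M. \<tau> x \<in> I \<longrightarrow> ennreal (8 * w) \<le> nn_cond_exp M F\<tau> (\<lambda>x. abs_diff (\<tau>' x) (\<tau> x)) x"
      using B_spread by (intro AE_I2) (simp add: I_def w_def)
  qed (use I_sub w in auto)
  moreover have "0 < measure M {x \<in> space M. \<tau> x \<in> I}"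
  proof -
    have "{x \<in> space M. \<tau> x \<in> I} = \<tau> -` I \<inter> space M"
      by auto
    with k have "{x \<in> space M. \<tau> x \<in> I} \<notin> null_sets M"
      unfolding I_def by (simp only: not_False_eq_True)
    moreover have "{x \<in> space M. \<tau> x \<in> I} \<in> sets M"
      by measurable
    ultimately have "emeasure M {x \<in> space M. \<tau> x \<in> I} \<noteq> 0"
      by (auto simp: null_sets_def)
    then show ?thesis
      by (simp add: M.emeasure_eq_measure zero_less_measure_iff)
  qed
  ultimately show thesis
    using that I_sub by blast
qed

end

theorem lemma3p3:
  fixes M :: "'a measure" and \<tau> \<tau>' :: "'a \<Rightarrow> ennreal" and d :: nat
  assumes "d \<ge> 2"
    and "prob_space M"
    and "\<tau> \<in> borel_measurable M" and "\<tau>' \<in> borel_measurable M"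
    and H1: "useful d (distr M borel \<tau>)"
    and H2: "measure M {x \<in> space M. \<tau> x < \<infinity>} > p_c d"
            "measure M {x \<in> space M. \<tau>' x < \<infinity>} > p_c d"
    and H3: "distr M borel \<tau> \<noteq> distr M borel \<tau>'"
    and "AE x in M. nn_cond_exp M (vimage_algebra (space M) \<tau> borel) \<tau>' x \<le> \<tau> x"
    and "AE x in M. nn_cond_exp M (vimage_algebra (space M) \<tau> borel) \<tau>' x = \<tau> x"
    and "AE x in M. (\<tau> x < \<infinity>) = (\<tau>' x < \<infinity>)"
  shows "\<exists>(I :: ennreal set) (\<eta> :: real) (b :: real).
     I \<in> sets borel \<and> I \<subseteq> {0<..ennreal b} \<and> \<eta> > 0 \<and>
     measure M {x \<in> space M. \<tau> x \<in> I} > 0 \<and>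
     (let J = distr M (borel \<Otimes>\<^sub>M borel) (\<lambda>x. (\<tau> x, \<tau>' x));
          N = PiM {..<4::nat} (\<lambda>_. J);
          F = vimage_algebra (space N) (\<lambda>\<omega>. \<lambda>i\<in>{..<4::nat}. fst (\<omega> i))
                (PiM {..<4::nat} (\<lambda>_. borel))
      in AE \<omega> in N. (\<forall>i<4. fst (\<omega> i) \<in> I) \<longrightarrow>
           nn_cond_exp N F (\<lambda>\<omega>. min (snd (\<omega> 0) + snd (\<omega> 1)) (snd (\<omega> 2) + snd (\<omega> 3))) \<omega>
             + ennreal \<eta>
           < min (fst (\<omega> 0) + fst (\<omega> 1)) (fst (\<omega> 2) + fst (\<omega> 3)))"
proof -
  interpret mean_preserving_pair M \<tau> \<tau>'
    by (rule mean_preserving_pair.intro) fact+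
  obtain I w b where "spread_window M \<tau> \<tau>' I w b" and I_sub: "I \<subseteq> {0<..ennreal b}"
    and I_pos: "0 < measure M {x \<in> space M. \<tau> x \<in> I}"
    using exists_spread_window[OF H3 \<open>AE x in M. (\<tau> x < \<infinity>) = (\<tau>' x < \<infinity>)\<close>] .
  then interpret spread_window M \<tau> \<tau>' I w b
    by simp
  show ?thesis
    unfolding Let_def using sets_I I_sub w_pos I_pos AE_cond_exp_min_snd_gap by blast
qed

end
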